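(* Let $G$ be a connected unicyclic graph with largest vertex degree $\Delta\ge3$ and let $\alpha\in[0,1)$. If $\Delta\ge4$, or $\Delta=3$ and $k(G)\ge4$, then \[ \rho(A_\alpha(G))<\alpha\Delta+2(1-\alpha)\sqrt{\Delta-1}\cos\frac{\pi}{2k(G)+1}. \]
   Context: $A_\alpha(G)=\alpha D(G)+(1-\alpha)A(G)$ ($D$ degree matrix, $A$ adjacency matrix), and $\rho(M)$ is the spectral radius of $M$. A unicyclic graph is a connected graph with exactly one cycle. If $C_r$ is the unique cycle of $G$ with vertices $v_1,\dots,v_r$, removing the edges of $C_r$ leaves a forest of $r$ trees $T_1,\dots,T_r$ rooted at $v_1,\dots,v_r$; the height $h(T_i)$ is the largest distance from $v_i$ to a vertex of $T_i$, and the height of $G$ is $k(G)=\max_{1\le i\le r}h(T_i)+1$. *)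

theory Defs
  imports Complex_Main "Jordan_Normal_Form.Spectral_Radius"
begin

definition graph :: "nat \<Rightarrow> (nat \<Rightarrow> nat \<Rightarrow> bool) \<Rightarrow> bool" where
  "graph n E \<longleftrightarrow> (\<forall>i j. E i j \<longrightarrow> i < n \<and> j < n \<and> i \<noteq> j \<and> E j i)"

definition deg :: "nat \<Rightarrow> (nat \<Rightarrow> nat \<Rightarrow> bool) \<Rightarrow> nat \<Rightarrow> nat" where
  "deg n E i = card {j. j < n \<and> E i j}"

definition max_deg :: "nat \<Rightarrow> (nat \<Rightarrow> nat \<Rightarrow> bool) \<Rightarrow> nat" where
  "max_deg n E = Max {deg n E i | i. i < n}"

definition walk_len :: "(nat \<Rightarrow> nat \<Rightarrow> bool) \<Rightarrow> nat \<Rightarrow> nat \<Rightarrow> nat \<Rightarrow> bool" where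
  "walk_len E u v m \<longleftrightarrow> (\<exists>xs. length xs = Suc m \<and> hd xs = u \<and> last xs = v \<and>
      (\<forall>i < m. E (xs ! i) (xs ! Suc i)))"

definition reachable :: "(nat \<Rightarrow> nat \<Rightarrow> bool) \<Rightarrow> nat \<Rightarrow> nat \<Rightarrow> bool" where
  "reachable E u v \<longleftrightarrow> (\<exists>m. walk_len E u v m)"

definition dist :: "(nat \<Rightarrow> nat \<Rightarrow> bool) \<Rightarrow> nat \<Rightarrow> nat \<Rightarrow> nat" where
  "dist E u v = (LEAST m. walk_len E u v m)"

definition connected_graph :: "nat \<Rightarrow> (nat \<Rightarrow> nat \<Rightarrow> bool) \<Rightarrow> bool" where
  "connected_graph n E \<longleftrightarrow> graph n E \<and> n > 0 \<and> (\<forall>u<n. \<forall>v<n. reachable E u v)"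

text \<open>A cycle, identified with its edge set (edges are 2-element vertex sets):
  distinct vertices x_0,...,x_{r-1}, r \<ge> 3, with x_i adjacent to x_{i+1 mod r}.\<close>
definition is_cycle :: "nat \<Rightarrow> (nat \<Rightarrow> nat \<Rightarrow> bool) \<Rightarrow> nat set set \<Rightarrow> bool" where
  "is_cycle n E C \<longleftrightarrow> (\<exists>xs. distinct xs \<and> length xs \<ge> 3 \<and> set xs \<subseteq> {0..<n} \<and>
      (\<forall>i < length xs. E (xs ! i) (xs ! ((i + 1) mod length xs))) \<and>
      C = {{xs ! i, xs ! ((i + 1) mod length xs)} | i. i < length xs})"

definition unicyclic :: "nat \<Rightarrow> (nat \<Rightarrow> nat \<Rightarrow> bool) \<Rightarrow> bool" where
  "unicyclic n E \<longleftrightarrow> connected_graph n E \<and> (\<exists>!C. is_cycle n E C)"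

definition the_cycle :: "nat \<Rightarrow> (nat \<Rightarrow> nat \<Rightarrow> bool) \<Rightarrow> nat set set" where
  "the_cycle n E = (THE C. is_cycle n E C)"

text \<open>Graph obtained by deleting the edges of the cycle: the forest of trees T_i.\<close>
definition forest_rel :: "nat \<Rightarrow> (nat \<Rightarrow> nat \<Rightarrow> bool) \<Rightarrow> nat \<Rightarrow> nat \<Rightarrow> bool" where
  "forest_rel n E = (\<lambda>x y. E x y \<and> {x, y} \<notin> the_cycle n E)"

text \<open>h(T_i) for the tree rooted at cycle vertex v: largest distance from v within T_i.\<close>
definition tree_height :: "nat \<Rightarrow> (nat \<Rightarrow> nat \<Rightarrow> bool) \<Rightarrow> nat \<Rightarrow> nat" where
  "tree_height n E v = Max {dist (forest_rel n E) v u | u. u < n \<and> reachable (forest_rel n E) v u}"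

text \<open>k(G) = max_i h(T_i) + 1.\<close>
definition height :: "nat \<Rightarrow> (nat \<Rightarrow> nat \<Rightarrow> bool) \<Rightarrow> nat" where
  "height n E = Max {tree_height n E v | v. v \<in> \<Union>(the_cycle n E)} + 1"

definition A_alpha :: "real \<Rightarrow> nat \<Rightarrow> (nat \<Rightarrow> nat \<Rightarrow> bool) \<Rightarrow> complex mat" where
  "A_alpha \<alpha> n E = mat n n (\<lambda>(i, j). complex_of_real
      (\<alpha> * (if i = j then real (deg n E i) else 0) + (1 - \<alpha>) * (if E i j then 1 else 0)))"

end

theory Submission
  imports Defs
begin

text \<open>
  A positive vector x with every row of A_alpha(G) strictly below lambda times x certifies
  rho(A_alpha(G)) < lambda (Collatz--Wielandt). We take x(u) = f(d(u)), where d(u) is the distance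
  from u to the cycle inside its tree and f(j) = sin((k - j) beta) / sqrt(Delta - 1)^j for a beta
  slightly above pi/(2k + 1). In a unicyclic graph a vertex at depth j >= 1 has at most one
  neighbour of depth at most j (a second one would close a second cycle) and a cycle vertex has
  at most two cycle neighbours, so the row inequalities reduce to the three-term recurrence of f, which
  holds with room to spare since cos beta < cos (pi/(2k + 1)), and to a condition at the cycle.
  At beta = pi/(2k + 1) the latter amounts to Delta - 2 - 2 sqrt(Delta - 1) + 2 cos(pi/(2k + 1))
  > 0, which is where Delta >= 4, or Delta = 3 and k >= 4, is needed; by continuity it persists
  for beta slightly larger.
\<close>

section \<open>A row-sum bound for the spectral radius\<close>

lemma spectral_radius_less_of_row_bound:
  fixes M :: "nat \<Rightarrow> nat \<Rightarrow> real" and x :: "nat \<Rightarrow> real" and r :: real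
  assumes n: "0 < n"
    and M_nonneg: "\<And>i j. i < n \<Longrightarrow> j < n \<Longrightarrow> 0 \<le> M i j"
    and x_pos: "\<And>i. i < n \<Longrightarrow> 0 < x i"
    and row_bound: "\<And>i. i < n \<Longrightarrow> (\<Sum>j<n. M i j * x j) < r * x i"
  shows "spectral_radius (mat n n (\<lambda>(i, j). complex_of_real (M i j))) < r"
proof -
  define A where "A = mat n n (\<lambda>(i, j). complex_of_real (M i j))"
  have A: "A \<in> carrier_mat n n" unfolding A_def by auto
  from spectral_radius_mem_max(1)[OF A n] obtain ev where
    ev: "ev \<in> spectrum A" and sr: "spectral_radius A = norm ev" by auto
  from ev obtain v where v: "v \<in> carrier_vec n" "v \<noteq> 0\<^sub>v n" "A *\<^sub>v v = ev \<cdot>\<^sub>v v"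
    unfolding spectrum_def eigenvalue_def eigenvector_def using A by auto
  \<comment> \<open>Compare v with x at an index maximising |v i| / x i.\<close>
  define t where "t i = norm (v $ i) / x i" for i
  define T where "T = Max (t ` {..<n})"
  have fin: "finite (t ` {..<n})" and ne: "t ` {..<n} \<noteq> {}" using n by auto
  from Max_in[OF fin ne] obtain i0 where i0: "i0 < n" "t i0 = T" unfolding T_def by auto
  have t_le: "t j \<le> T" if "j < n" for j unfolding T_def using that fin by auto
  have v_le: "norm (v $ j) \<le> T * x j" if "j < n" for j
    using t_le[OF that] x_pos[OF that] unfolding t_def by (simp add: divide_le_eq)
  from v(1,2) obtain j where j: "j < n" "v $ j \<noteq> 0"
    by (metis carrier_vecD eq_vecI index_zero_vec(1) index_zero_vec(2))
  have "0 < t j" unfolding t_def using j x_pos[OF j(1)] by auto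
  hence T_pos: "0 < T" using t_le[OF j(1)] by auto
  have v_i0: "norm (v $ i0) = T * x i0" using i0 x_pos[OF i0(1)] unfolding t_def by auto
  hence v_i0_pos: "0 < norm (v $ i0)" using T_pos x_pos[OF i0(1)] by auto
  have "(A *\<^sub>v v) $ i0 = (\<Sum>j<n. complex_of_real (M i0 j) * v $ j)"
    using i0 v(1) unfolding A_def
    by (auto simp: scalar_prod_def lessThan_atLeast0 intro!: sum.cong)
  hence eq: "ev * v $ i0 = (\<Sum>j<n. complex_of_real (M i0 j) * v $ j)"
    using v(3) i0 v(1) by (metis carrier_vecD index_smult_vec(1))
  have "norm ev * norm (v $ i0) = norm (\<Sum>j<n. complex_of_real (M i0 j) * v $ j)"
    by (metis eq norm_mult)
  also have "\<dots> \<le> (\<Sum>j<n. M i0 j * norm (v $ j))"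
    using norm_sum[of "\<lambda>j. complex_of_real (M i0 j) * v $ j" "{..<n}"]
    by (simp add: norm_mult M_nonneg i0)
  also have "\<dots> \<le> (\<Sum>j<n. M i0 j * (T * x j))"
    by (intro sum_mono mult_left_mono v_le M_nonneg i0) auto
  also have "\<dots> = T * (\<Sum>j<n. M i0 j * x j)"
    by (simp add: sum_distrib_left algebra_simps)
  also have "\<dots> < T * (r * x i0)" using row_bound[OF i0(1)] T_pos by simp
  also have "\<dots> = r * norm (v $ i0)" using v_i0 by simp
  finally have "norm ev < r" using v_i0_pos by simp
  thus ?thesis using sr unfolding A_def by simp
qed

lemma sum_le_split_bound:
  fixes g :: "'a \<Rightarrow> real" and a D :: nat
  assumes fin: "finite N" and sub: "N0 \<subseteq> N" and ca: "card N0 \<le> a" and cD: "card N \<le> D"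
    and gA: "\<And>w. w \<in> N0 \<Longrightarrow> g w \<le> A" and gB: "\<And>w. w \<in> N - N0 \<Longrightarrow> g w \<le> B"
    and B0: "0 \<le> B" and BA: "B \<le> A"
  shows "sum g N \<le> real a * (A - B) + real D * B"
proof -
  have fin0: "finite N0" using fin sub finite_subset by blast
  have c: "card N0 \<le> card N" using card_mono[OF fin sub] .
  have "sum g N = sum g N0 + sum g (N - N0)" using sum.subset_diff[OF sub fin, of g] by linarith
  also have "\<dots> \<le> real (card N0) * A + real (card (N - N0)) * B"
    using sum_bounded_above[of N0 g A] sum_bounded_above[of "N - N0" g B] gA gB
    by (intro add_mono) auto
  also have "real (card (N - N0)) = real (card N) - real (card N0)"
    using card_Diff_subset[OF fin0 sub] c by simp
  also have "real (card N0) * A + (real (card N) - real (card N0)) * B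
      = real (card N0) * (A - B) + real (card N) * B" by (simp add: algebra_simps)
  also have "\<dots> \<le> real a * (A - B) + real D * B"
    using ca cD B0 BA by (intro add_mono mult_right_mono) auto
  finally show ?thesis .
qed

definition neighbours :: "nat \<Rightarrow> (nat \<Rightarrow> nat \<Rightarrow> bool) \<Rightarrow> nat \<Rightarrow> nat set" where
  "neighbours n E u = {v. v < n \<and> E u v}"

lemma finite_neighbours [simp]: "finite (neighbours n E u)"
  unfolding neighbours_def by simp

lemma deg_eq_card_neighbours: "deg n E u = card (neighbours n E u)"
  unfolding deg_def neighbours_def ..

lemma deg_le_max_deg: "u < n \<Longrightarrow> deg n E u \<le> max_deg n E"
  unfolding max_deg_def by (rule Max_ge) auto

lemma max_deg_attained:
  assumes "0 < n"
  obtains v where "v < n" "deg n E v = max_deg n E"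
proof -
  have "{deg n E i |i. i < n} = deg n E ` {..<n}" by auto
  moreover have "Max (deg n E ` {..<n}) \<in> deg n E ` {..<n}" using assms by (intro Max_in) auto
  ultimately show ?thesis using that unfolding max_deg_def by auto
qed

lemma spectral_radius_A_alpha_less:
  fixes x :: "nat \<Rightarrow> real"
  assumes n: "0 < n" and \<alpha>: "0 \<le> \<alpha>" "\<alpha> < 1"
    and deg_le: "\<And>u. u < n \<Longrightarrow> deg n E u \<le> D"
    and x_pos: "\<And>u. u < n \<Longrightarrow> 0 < x u"
    and neighbour_sum: "\<And>u. u < n \<Longrightarrow> (\<Sum>w\<in>neighbours n E u. x w) < \<mu> * x u"
  shows "spectral_radius (A_alpha \<alpha> n E) < \<alpha> * real D + (1 - \<alpha>) * \<mu>"
  unfolding A_alpha_def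
proof (rule spectral_radius_less_of_row_bound[OF n _ x_pos])
  fix u assume u: "u < n"
  let ?a = "\<lambda>j. \<alpha> * (if u = j then real (deg n E u) else 0) + (1 - \<alpha>) * (if E u j then 1 else 0)"
  have "?a j * x j = (if u = j then \<alpha> * real (deg n E u) * x u else 0)
      + (1 - \<alpha>) * (if E u j then x j else 0)" for j
    by (simp add: algebra_simps)
  hence "(\<Sum>j<n. ?a j * x j) = \<alpha> * real (deg n E u) * x u + (1 - \<alpha>) * (\<Sum>w\<in>neighbours n E u. x w)"
    using u by (simp add: sum.distrib sum_distrib_left[symmetric] neighbours_def
        sum.inter_filter[symmetric] lessThan_def)
  also have "\<dots> < \<alpha> * real D * x u + (1 - \<alpha>) * (\<mu> * x u)"
    using \<alpha> deg_le[OF u] x_pos[OF u] neighbour_sum[OF u]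
    by (intro add_le_less_mono mult_right_mono mult_left_mono mult_strict_left_mono) auto
  finally show "(\<Sum>j<n. ?a j * x j) < (\<alpha> * real D + (1 - \<alpha>) * \<mu>) * x u"
    by (simp add: algebra_simps)
qed (use \<alpha> in auto)

section \<open>Walks and cycles\<close>

lemma walk_len_0: "walk_len R u v 0 \<longleftrightarrow> u = v"
proof
  assume "walk_len R u v 0"
  then obtain xs where "length xs = 1" "hd xs = u" "last xs = v"
    unfolding walk_len_def by auto
  thus "u = v" by (cases xs) auto
next
  assume "u = v"
  thus "walk_len R u v 0" unfolding walk_len_def by (intro exI[of _ "[u]"]) auto
qed

lemma walk_len_Suc: "walk_len R u v (Suc m) \<longleftrightarrow> (\<exists>w. walk_len R u w m \<and> R w v)"
proof
  assume "walk_len R u v (Suc m)"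
  then obtain xs where xs: "length xs = Suc (Suc m)" "hd xs = u" "last xs = v"
    "\<forall>i<Suc m. R (xs ! i) (xs ! Suc i)" unfolding walk_len_def by auto
  have "walk_len R u (xs ! m) m" unfolding walk_len_def
  proof (intro exI[of _ "take (Suc m) xs"] conjI allI impI)
    show "hd (take (Suc m) xs) = u" using xs by (cases xs) auto
    show "last (take (Suc m) xs) = xs ! m" using xs by (subst last_conv_nth) auto
  qed (use xs in auto)
  moreover have "R (xs ! m) v" using xs last_conv_nth[of xs] by (cases xs) auto
  ultimately show "\<exists>w. walk_len R u w m \<and> R w v" by blast
next
  assume "\<exists>w. walk_len R u w m \<and> R w v"
  then obtain w xs where w: "R w v" and xs: "length xs = Suc m" "hd xs = u" "last xs = w"
    "\<forall>i<m. R (xs ! i) (xs ! Suc i)" unfolding walk_len_def by auto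
  have xs_m: "xs ! m = w" using xs last_conv_nth[of xs] by (cases xs) auto
  show "walk_len R u v (Suc m)" unfolding walk_len_def
  proof (intro exI[of _ "xs @ [v]"] conjI allI impI)
    show "hd (xs @ [v]) = u" using xs by (cases xs) auto
    fix i assume i: "i < Suc m"
    show "R ((xs @ [v]) ! i) ((xs @ [v]) ! Suc i)"
    proof (cases "i < m")
      case True thus ?thesis using xs by (simp add: nth_append)
    next
      case False hence "i = m" using i by simp
      thus ?thesis using xs xs_m w by (simp add: nth_append)
    qed
  qed (use xs in auto)
qed

lemma walk_len_iff_relpowp: "walk_len R u v m \<longleftrightarrow> (R ^^ m) u v"
  by (induction m arbitrary: v) (auto simp: walk_len_0 walk_len_Suc)

lemma relpowp_walk_segment:
  assumes "\<forall>i<m. R (xs ! i) (xs ! Suc i)" "a \<le> b" "b \<le> m"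
  shows "(R ^^ (b - a)) (xs ! a) (xs ! b)"
  using assms(2,3)
proof (induction b)
  case 0 thus ?case by simp
next
  case (Suc b)
  show ?case
  proof (cases "a = Suc b")
    case True thus ?thesis by simp
  next
    case False
    hence "a \<le> b" using Suc by simp
    hence "(R ^^ (b - a)) (xs ! a) (xs ! b)" using Suc by simp
    moreover have "R (xs ! b) (xs ! Suc b)" using assms(1) Suc by simp
    ultimately have "(R ^^ Suc (b - a)) (xs ! a) (xs ! Suc b)" by (rule relpowp_Suc_I)
    thus ?thesis using \<open>a \<le> b\<close> by (simp add: Suc_diff_le)
  qed
qed

lemma shortest_walk_distinct:
  assumes len: "length xs = Suc m" and walk: "\<forall>i<m. R (xs ! i) (xs ! Suc i)"
    and shortest: "\<And>m'. (R ^^ m') (xs ! 0) (xs ! m) \<Longrightarrow> m \<le> m'"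
  shows "distinct xs"
proof (rule ccontr)
  assume "\<not> distinct xs"
  then obtain i0 j0 where ij0: "i0 < length xs" "j0 < length xs" "i0 \<noteq> j0" "xs ! i0 = xs ! j0"
    unfolding distinct_conv_nth by blast
  obtain i j where ij: "i < j" "j < length xs" "xs ! i = xs ! j"
  proof (cases "i0 < j0")
    case True thus ?thesis using that ij0 by blast
  next
    case False hence "j0 < i0" using ij0 by simp
    thus ?thesis using that ij0 by metis
  qed
  \<comment> \<open>Skipping the closed subwalk between positions i and j gives a shorter walk.\<close>
  have "(R ^^ (i - 0)) (xs ! 0) (xs ! i)"
    by (rule relpowp_walk_segment[OF walk]) (use ij len in auto)
  moreover have "(R ^^ (m - j)) (xs ! j) (xs ! m)"
    by (rule relpowp_walk_segment[OF walk]) (use ij len in auto)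
  ultimately have "(R ^^ (i + (m - j))) (xs ! 0) (xs ! m)"
    using ij by (simp add: relpowp_add relcompp.relcompI)
  from shortest[OF this] show False using ij len by simp
qed

lemma is_cycle_of_closed_path:
  assumes G: "graph n E" and xs: "distinct xs" "3 \<le> length xs"
    and path: "\<And>i. Suc i < length xs \<Longrightarrow> E (xs ! i) (xs ! Suc i)"
    and closing: "E (last xs) (hd xs)"
  shows "is_cycle n E {{xs ! i, xs ! ((i + 1) mod length xs)} | i. i < length xs}"
  unfolding is_cycle_def
proof (intro exI[of _ xs] conjI allI impI)
  have "xs \<noteq> []" using xs by auto
  hence hd: "hd xs = xs ! 0" and last: "last xs = xs ! (length xs - 1)"
    by (simp_all add: hd_conv_nth last_conv_nth)
  show edge: "E (xs ! i) (xs ! ((i + 1) mod length xs))" if "i < length xs" for i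
  proof (cases "Suc i < length xs")
    case True thus ?thesis using path by simp
  next
    case False
    hence "Suc i = length xs" using that by simp
    hence "i = length xs - 1" "(i + 1) mod length xs = 0" by auto
    thus ?thesis using closing hd last by simp
  qed
  show "set xs \<subseteq> {0..<n}"
  proof
    fix v assume "v \<in> set xs"
    then obtain i where "i < length xs" "xs ! i = v" unfolding in_set_conv_nth by blast
    thus "v \<in> {0..<n}" using edge G unfolding graph_def by auto
  qed
qed (use xs in simp_all)

lemma cycle_through_edge:
  assumes G: "graph n E" and exy: "E x y"
    and W: "(\<lambda>a b. E a b \<and> {a, b} \<noteq> {x, y})\<^sup>*\<^sup>* y x"
  shows "\<exists>C. is_cycle n E C \<and> {x, y} \<in> C"
proof -
  define R where "R = (\<lambda>a b. E a b \<and> {a, b} \<noteq> {x, y})"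
  from W obtain m0 where "(R ^^ m0) y x" unfolding R_def rtranclp_power by blast
  define m where "m = (LEAST m. (R ^^ m) y x)"
  have Rm: "(R ^^ m) y x" unfolding m_def by (rule LeastI) fact
  from Rm obtain xs where xs: "length xs = Suc m" "hd xs = y" "last xs = x"
    "\<forall>i<m. R (xs ! i) (xs ! Suc i)" unfolding walk_len_iff_relpowp[symmetric] walk_len_def by auto
  have x0: "xs ! 0 = y" using xs by (cases xs) auto
  have xm: "xs ! m = x" using xs last_conv_nth[of xs] by (cases xs) auto
  have "distinct xs"
    using xs(1,4) by (rule shortest_walk_distinct) (use x0 xm in \<open>auto simp: m_def Least_le\<close>)
  have "m \<noteq> 0"
  proof
    assume "m = 0"
    hence "y = x" using Rm by simp
    thus False using exy G unfolding graph_def by blast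
  qed
  moreover have "m \<noteq> 1" using Rm unfolding R_def by (auto simp: insert_commute)
  ultimately have "3 \<le> length xs" using xs by simp
  have "is_cycle n E {{xs ! i, xs ! ((i + 1) mod length xs)} | i. i < length xs}"
    using G \<open>distinct xs\<close> \<open>3 \<le> length xs\<close> xs exy unfolding R_def
    by (intro is_cycle_of_closed_path) auto
  moreover have "{x, y} \<in> {{xs ! i, xs ! ((i + 1) mod length xs)} | i. i < length xs}"
    by (rule CollectI, rule exI[of _ m]) (use xs xm x0 in simp)
  ultimately show ?thesis by blast
qed

section \<open>Depth below the cycle of a unicyclic graph\<close>

abbreviation cycle_vertices :: "nat \<Rightarrow> (nat \<Rightarrow> nat \<Rightarrow> bool) \<Rightarrow> nat set" where
  "cycle_vertices n E \<equiv> \<Union>(the_cycle n E)"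

definition cycle_depth :: "nat \<Rightarrow> (nat \<Rightarrow> nat \<Rightarrow> bool) \<Rightarrow> nat \<Rightarrow> nat" where
  "cycle_depth n E u = (LEAST m. \<exists>c \<in> cycle_vertices n E. (forest_rel n E ^^ m) c u)"

definition cycle_list :: "nat \<Rightarrow> (nat \<Rightarrow> nat \<Rightarrow> bool) \<Rightarrow> nat list \<Rightarrow> bool" where
  "cycle_list n E cs \<longleftrightarrow> distinct cs \<and> 3 \<le> length cs \<and> set cs \<subseteq> {0..<n} \<and>
      (\<forall>i < length cs. E (cs ! i) (cs ! ((i + 1) mod length cs))) \<and>
      the_cycle n E = {{cs ! i, cs ! ((i + 1) mod length cs)} | i. i < length cs}"

lemma mod_pred_of_mod_Suc:
  fixes i p r :: nat
  assumes "i < r" "p = (i + 1) mod r"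
  shows "i = (p + r - 1) mod r"
proof (cases "i + 1 < r")
  case True thus ?thesis using assms by simp
next
  case False hence "i + 1 = r" using assms by simp
  thus ?thesis using assms by simp
qed

context
  fixes n :: nat and E :: "nat \<Rightarrow> nat \<Rightarrow> bool"
  assumes U: "unicyclic n E"
begin

lemma unicyclic_graph: "graph n E" using U unfolding unicyclic_def connected_graph_def by auto

lemma unicyclic_edgeD: "E a b \<Longrightarrow> a < n \<and> b < n \<and> a \<noteq> b \<and> E b a"
  using unicyclic_graph unfolding graph_def by blast

lemma unicyclic_pos: "0 < n" using U unfolding unicyclic_def connected_graph_def by auto

lemma unicyclic_reachable: "u < n \<Longrightarrow> v < n \<Longrightarrow> reachable E u v"
  using U unfolding unicyclic_def connected_graph_def by auto

lemma ex1_cycle: "\<exists>!C. is_cycle n E C" using U unfolding unicyclic_def by simp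

lemma the_cycle_is_cycle: "is_cycle n E (the_cycle n E)"
  unfolding the_cycle_def by (rule theI'[OF ex1_cycle])

lemma is_cycle_unique: "is_cycle n E C \<Longrightarrow> C = the_cycle n E"
  using ex1_cycle the_cycle_is_cycle by blast

lemma ex_cycle_list: "\<exists>cs. cycle_list n E cs"
  using the_cycle_is_cycle unfolding is_cycle_def cycle_list_def by blast

lemma cycle_vertices_eq_set: "cycle_list n E cs \<Longrightarrow> cycle_vertices n E = set cs"
proof -
  assume cl: "cycle_list n E cs"
  let ?r = "length cs"
  have r: "?r \<ge> 3" using cl unfolding cycle_list_def by auto
  have C: "the_cycle n E = {{cs ! i, cs ! ((i + 1) mod ?r)} | i. i < ?r}"
    using cl unfolding cycle_list_def by auto
  show ?thesis
  proof
    show "cycle_vertices n E \<subseteq> set cs"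
    proof
      fix a assume "a \<in> cycle_vertices n E"
      then obtain i where "i < ?r" "a \<in> {cs ! i, cs ! ((i + 1) mod ?r)}" unfolding C by auto
      moreover have "(i + 1) mod ?r < ?r" by (rule mod_less_divisor) (use r in linarith)
      ultimately show "a \<in> set cs" by auto
    qed
  next
    show "set cs \<subseteq> cycle_vertices n E"
    proof
      fix a assume "a \<in> set cs"
      then obtain i where i: "i < ?r" "cs ! i = a" unfolding in_set_conv_nth by blast
      hence "{cs ! i, cs ! ((i + 1) mod ?r)} \<in> the_cycle n E" unfolding C by blast
      thus "a \<in> cycle_vertices n E" using i by blast
    qed
  qed
qed

lemma cycle_vertex_less: "a \<in> cycle_vertices n E \<Longrightarrow> a < n"
proof -
  obtain cs where cl: "cycle_list n E cs" using ex_cycle_list by blast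
  assume "a \<in> cycle_vertices n E"
  hence "a \<in> set cs" using cycle_vertices_eq_set[OF cl] by simp
  thus "a < n" using cl unfolding cycle_list_def by auto
qed

lemma finite_cycle_vertices: "finite (cycle_vertices n E)"
proof -
  obtain cs where cl: "cycle_list n E cs" using ex_cycle_list by blast
  show ?thesis using cycle_vertices_eq_set[OF cl] by simp
qed

lemma cycle_rtranclp:
  assumes a: "a \<in> cycle_vertices n E" and b: "b \<in> cycle_vertices n E"
  shows "(\<lambda>x y. E x y \<and> {x, y} \<in> the_cycle n E)\<^sup>*\<^sup>* a b"
proof -
  obtain cs where cl: "cycle_list n E cs" using ex_cycle_list by blast
  let ?r = "length cs"
  let ?S = "\<lambda>x y. E x y \<and> {x, y} \<in> the_cycle n E"
  have r: "?r \<ge> 3" using cl unfolding cycle_list_def by auto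
  have C: "the_cycle n E = {{cs ! i, cs ! ((i + 1) mod ?r)} | i. i < ?r}"
    using cl unfolding cycle_list_def by auto
  have Ecs: "\<forall>i < ?r. E (cs ! i) (cs ! ((i + 1) mod ?r))" using cl unfolding cycle_list_def by auto
  have "a \<in> set cs" "b \<in> set cs" using a b cycle_vertices_eq_set[OF cl] by auto
  then obtain p q where p: "p < ?r" "cs ! p = a" and q: "q < ?r" "cs ! q = b"
    by (metis in_set_conv_nth)
  have step: "?S\<^sup>*\<^sup>* (cs ! p) (cs ! ((p + t) mod ?r))" for t
  proof (induction t)
    case 0 thus ?case using p by simp
  next
    case (Suc t)
    define i where "i = (p + t) mod ?r"
    have i: "i < ?r" unfolding i_def by (rule mod_less_divisor) (use r in linarith)
    have ii: "(i + 1) mod ?r = (p + Suc t) mod ?r" unfolding i_def by (simp add: mod_Suc_eq)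
    have "?S (cs ! i) (cs ! ((i + 1) mod ?r))" using Ecs i unfolding C by blast
    hence "?S (cs ! ((p + t) mod ?r)) (cs ! ((p + Suc t) mod ?r))" using ii unfolding i_def by simp
    thus ?case using Suc.IH by (rule rtranclp.rtrancl_into_rtrancl[rotated])
  qed
  have "p + (q + ?r - p) = q + ?r" using p by simp
  hence "(p + (q + ?r - p)) mod ?r = q" using q by simp
  thus ?thesis using step[of "q + ?r - p"] p q by simp
qed

lemma forest_rel_imp_edge: "forest_rel n E a b \<Longrightarrow> E a b" unfolding forest_rel_def by simp

lemma forest_rel_sym: "forest_rel n E a b \<Longrightarrow> forest_rel n E b a"
  unfolding forest_rel_def using unicyclic_edgeD by (auto simp: insert_commute)

lemma ex_forest_root:
  assumes u: "u < n"
  shows "\<exists>c\<in>cycle_vertices n E. \<exists>m. (forest_rel n E ^^ m) c u"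
proof -
  obtain cs where cl: "cycle_list n E cs" using ex_cycle_list by blast
  hence "0 < length cs" unfolding cycle_list_def by linarith
  hence c0: "cs ! 0 \<in> cycle_vertices n E" unfolding cycle_vertices_eq_set[OF cl] by (rule nth_mem)
  then obtain m where "(E ^^ m) (cs ! 0) u"
    using unicyclic_reachable[OF cycle_vertex_less u] unfolding reachable_def walk_len_iff_relpowp
    by blast
  then show ?thesis
  proof (induction m arbitrary: u)
    case 0
    thus ?case using c0 by (intro bexI[of _ "cs ! 0"] exI[of _ 0]) auto
  next
    case (Suc m)
    then obtain w where w: "(E ^^ m) (cs ! 0) w" "E w u" by (auto elim: relpowp_Suc_E)
    from Suc.IH[OF w(1)] obtain c m' where c: "c \<in> cycle_vertices n E" "(forest_rel n E ^^ m') c w"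
      by blast
    show ?case
    proof (cases "{w, u} \<in> the_cycle n E")
      case True
      thus ?thesis by (intro bexI[of _ u] exI[of _ 0]) auto
    next
      case False
      hence "forest_rel n E w u" using w unfolding forest_rel_def by simp
      with c show ?thesis by (meson relpowp_Suc_I)
    qed
  qed
qed

lemma cycle_depth_witness:
  "u < n \<Longrightarrow> \<exists>c\<in>cycle_vertices n E. (forest_rel n E ^^ cycle_depth n E u) c u"
  unfolding cycle_depth_def by (rule LeastI_ex) (use ex_forest_root in blast)

lemma cycle_depth_le:
  "c \<in> cycle_vertices n E \<Longrightarrow> (forest_rel n E ^^ m) c u \<Longrightarrow> cycle_depth n E u \<le> m"
  unfolding cycle_depth_def by (rule Least_le) blast

lemma cycle_depth_eq_0_iff:
  assumes "u < n"
  shows "cycle_depth n E u = 0 \<longleftrightarrow> u \<in> cycle_vertices n E"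
proof
  assume "cycle_depth n E u = 0"
  thus "u \<in> cycle_vertices n E" using cycle_depth_witness[OF assms] by auto
next
  assume "u \<in> cycle_vertices n E"
  hence "cycle_depth n E u \<le> 0" by (intro cycle_depth_le[of u]) auto
  thus "cycle_depth n E u = 0" by simp
qed

lemma cycle_depth_forest_step:
  assumes wu: "forest_rel n E w u"
  shows "cycle_depth n E u \<le> Suc (cycle_depth n E w)"
proof -
  have "w < n" using wu unicyclic_edgeD forest_rel_imp_edge by blast
  then obtain c where c: "c \<in> cycle_vertices n E" "(forest_rel n E ^^ cycle_depth n E w) c w"
    using cycle_depth_witness by blast
  have "(forest_rel n E ^^ Suc (cycle_depth n E w)) c u" using c(2) wu by (rule relpowp_Suc_I)
  thus ?thesis using c(1) by (rule cycle_depth_le[rotated])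
qed

lemma cycle_depth_less_height:
  assumes u: "u < n"
  shows "cycle_depth n E u < height n E"
proof -
  let ?F = "forest_rel n E"
  obtain c where c: "c \<in> cycle_vertices n E" "(?F ^^ cycle_depth n E u) c u"
    using cycle_depth_witness[OF u] by blast
  hence reach: "reachable ?F c u" unfolding reachable_def walk_len_iff_relpowp by blast
  hence "walk_len ?F c u (dist ?F c u)" unfolding dist_def reachable_def by (rule LeastI_ex)
  hence "(?F ^^ dist ?F c u) c u" by (simp only: walk_len_iff_relpowp)
  hence "cycle_depth n E u \<le> dist ?F c u" using c(1) by (intro cycle_depth_le)
  also have "\<dots> \<le> tree_height n E c"
    unfolding tree_height_def using u reach
    by (intro Max_ge) (auto simp: setcompr_eq_image intro: finite_subset[of _ "dist ?F c ` {..<n}"])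
  also have "\<dots> \<le> Max (tree_height n E ` cycle_vertices n E)"
    using c(1) finite_cycle_vertices by (intro Max_ge) auto
  also have "tree_height n E ` cycle_vertices n E = {tree_height n E v |v. v \<in> cycle_vertices n E}"
    by blast
  finally show ?thesis unfolding height_def by simp
qed

lemma forest_path_avoiding:
  assumes "c \<in> cycle_vertices n E"
  shows "(forest_rel n E ^^ m) c v \<Longrightarrow> m \<le> cycle_depth n E u \<Longrightarrow> v \<noteq> u \<Longrightarrow>
    (\<lambda>a b. forest_rel n E a b \<and> a \<noteq> u \<and> b \<noteq> u)\<^sup>*\<^sup>* c v"
proof (induction m arbitrary: v)
  case 0 thus ?case by simp
next
  case (Suc m)
  from Suc.prems(1) obtain w where w: "(forest_rel n E ^^ m) c w" "forest_rel n E w v"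
    by (rule relpowp_Suc_E)
  have "w \<noteq> u"
  proof
    assume "w = u"
    hence "cycle_depth n E u \<le> m" using cycle_depth_le[OF assms] w by blast
    thus False using Suc.prems by simp
  qed
  hence "(\<lambda>a b. forest_rel n E a b \<and> a \<noteq> u \<and> b \<noteq> u)\<^sup>*\<^sup>* c w" using Suc w by simp
  thus ?case using w \<open>w \<noteq> u\<close> Suc.prems(3) by (simp add: rtranclp.rtrancl_into_rtrancl)
qed

text \<open>
  Otherwise the walk w1, ..., c1, ..., c2, ..., w2, u through the two trees and the cycle avoids the
  edge {u, w1}, and closing it with that edge yields a cycle through u.
\<close>
lemma at_most_one_lower_neighbour:
  assumes u: "u < n" and d: "1 \<le> cycle_depth n E u"
    and e1: "E u w1" and e2: "E u w2"
    and d1: "cycle_depth n E w1 \<le> cycle_depth n E u"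
    and d2: "cycle_depth n E w2 \<le> cycle_depth n E u"
  shows "w1 = w2"
proof (rule ccontr)
  assume ne: "w1 \<noteq> w2"
  define R where "R = (\<lambda>a b. E a b \<and> {a, b} \<noteq> {u, w1})"
  have uV: "u \<notin> cycle_vertices n E" using cycle_depth_eq_0_iff[OF u] d by simp
  have R_sym: "R a b \<Longrightarrow> R b a" for a b
    unfolding R_def using unicyclic_edgeD by (auto simp: insert_commute)
  have from_cycle: "\<exists>c\<in>cycle_vertices n E. R\<^sup>*\<^sup>* c w"
    if w: "E u w" "cycle_depth n E w \<le> cycle_depth n E u" for w
  proof -
    obtain c where c: "c \<in> cycle_vertices n E" "(forest_rel n E ^^ cycle_depth n E w) c w"
      using cycle_depth_witness unicyclic_edgeD[OF w(1)] by blast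
    have "(\<lambda>a b. forest_rel n E a b \<and> a \<noteq> u \<and> b \<noteq> u)\<^sup>*\<^sup>* c w"
      using forest_path_avoiding[OF c w(2)] unicyclic_edgeD[OF w(1)] by simp
    hence "R\<^sup>*\<^sup>* c w" by (rule mono_rtranclp[rule_format, rotated])
      (use forest_rel_imp_edge in \<open>auto simp: R_def doubleton_eq_iff\<close>)
    with c(1) show ?thesis by blast
  qed
  obtain c1 where c1: "c1 \<in> cycle_vertices n E" "R\<^sup>*\<^sup>* c1 w1" using from_cycle e1 d1 by blast
  obtain c2 where c2: "c2 \<in> cycle_vertices n E" "R\<^sup>*\<^sup>* c2 w2" using from_cycle e2 d2 by blast
  have "R\<^sup>*\<^sup>* w1 c1" using symp_rtranclp[OF sympI[OF R_sym]] c1(2) by (rule sympD)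
  also have "R\<^sup>*\<^sup>* c1 c2" using cycle_rtranclp[OF c1(1) c2(1)]
    by (rule mono_rtranclp[rule_format, rotated]) (use uV in \<open>auto simp: R_def\<close>)
  also note c2(2)
  also have "R w2 u"
    unfolding R_def using unicyclic_edgeD[OF e2] ne by (auto simp: doubleton_eq_iff)
  finally have "R\<^sup>*\<^sup>* w1 u" by simp
  then obtain C where "is_cycle n E C" "{u, w1} \<in> C"
    using cycle_through_edge[OF unicyclic_graph e1] unfolding R_def by blast
  hence "{u, w1} \<in> the_cycle n E" using is_cycle_unique by blast
  thus False using uV by blast
qed

lemma cycle_neighbour_edge:
  assumes uV: "u \<in> cycle_vertices n E" and e: "E u w" and wV: "w \<in> cycle_vertices n E"
  shows "{u, w} \<in> the_cycle n E"
proof (rule ccontr)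
  assume nC: "{u, w} \<notin> the_cycle n E"
  define R where "R = (\<lambda>a b. E a b \<and> {a, b} \<noteq> {u, w})"
  have "R\<^sup>*\<^sup>* w u" using cycle_rtranclp[OF wV uV]
    by (rule mono_rtranclp[rule_format, rotated]) (use nC in \<open>auto simp: R_def\<close>)
  then obtain C' where "is_cycle n E C'" "{u, w} \<in> C'"
    using cycle_through_edge[OF unicyclic_graph e] unfolding R_def by blast
  thus False using is_cycle_unique nC by blast
qed

lemma card_cycle_neighbours_le_2:
  assumes uV: "u \<in> cycle_vertices n E"
  shows "card (neighbours n E u \<inter> cycle_vertices n E) \<le> 2"
proof -
  obtain cs where cl: "cycle_list n E cs" using ex_cycle_list by blast
  let ?r = "length cs"
  have C: "the_cycle n E = {{cs ! i, cs ! ((i + 1) mod ?r)} | i. i < ?r}"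
    using cl unfolding cycle_list_def by auto
  have dist: "distinct cs" and r: "?r \<ge> 3" using cl unfolding cycle_list_def by auto
  have "u \<in> set cs" using uV cycle_vertices_eq_set[OF cl] by auto
  then obtain p where p: "p < ?r" "cs ! p = u" by (metis in_set_conv_nth)
  let ?next = "cs ! ((p + 1) mod ?r)" and ?prev = "cs ! ((p + ?r - 1) mod ?r)"
  have sub: "neighbours n E u \<inter> cycle_vertices n E \<subseteq> {?next, ?prev}"
  proof
    fix w assume "w \<in> neighbours n E u \<inter> cycle_vertices n E"
    hence "{u, w} \<in> the_cycle n E" using cycle_neighbour_edge uV unfolding neighbours_def by blast
    then obtain i where i: "i < ?r" "{u, w} = {cs ! i, cs ! ((i + 1) mod ?r)}" unfolding C by blast
    have i1: "(i + 1) mod ?r < ?r" by (rule mod_less_divisor) (use r in linarith)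
    from i(2) have "(u = cs ! i \<and> w = cs ! ((i + 1) mod ?r))
        \<or> (u = cs ! ((i + 1) mod ?r) \<and> w = cs ! i)"
      by (auto simp: doubleton_eq_iff)
    thus "w \<in> {?next, ?prev}"
    proof
      assume h: "u = cs ! i \<and> w = cs ! ((i + 1) mod ?r)"
      hence "p = i" using p i dist nth_eq_iff_index_eq by metis
      thus ?thesis using h by simp
    next
      assume h: "u = cs ! ((i + 1) mod ?r) \<and> w = cs ! i"
      hence "p = (i + 1) mod ?r" using p i1 dist nth_eq_iff_index_eq by metis
      hence "i = (p + ?r - 1) mod ?r" using i(1) by (rule mod_pred_of_mod_Suc[rotated])
      thus ?thesis using h by simp
    qed
  qed
  have "card (neighbours n E u \<inter> cycle_vertices n E) \<le> card {?next, ?prev}"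
    by (rule card_mono[OF _ sub]) simp
  also have "\<dots> \<le> 2" by (simp add: card_insert_if)
  finally show ?thesis .
qed

lemma height_ge_2:
  assumes "3 \<le> max_deg n E"
  shows "2 \<le> height n E"
proof -
  obtain u where u: "u < n" "u \<notin> cycle_vertices n E"
  proof -
    obtain v where v: "v < n" "deg n E v = max_deg n E"
      using max_deg_attained[OF unicyclic_pos] .
    show ?thesis
    proof (cases "v \<in> cycle_vertices n E")
      case True
      have "\<not> neighbours n E v \<subseteq> cycle_vertices n E"
      proof
        assume "neighbours n E v \<subseteq> cycle_vertices n E"
        hence "neighbours n E v \<inter> cycle_vertices n E = neighbours n E v" by blast
        thus False using card_cycle_neighbours_le_2[OF True] v assms
          by (simp add: deg_eq_card_neighbours)
      qed
      thus ?thesis using that unfolding neighbours_def by blast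
    qed (use v that in blast)
  qed
  hence "cycle_depth n E u \<noteq> 0" using cycle_depth_eq_0_iff by blast
  thus ?thesis using cycle_depth_less_height[OF u(1)] by linarith
qed

lemma neighbour_sum_le_on_cycle:
  fixes f :: "nat \<Rightarrow> real"
  assumes card_le: "card (neighbours n E u) \<le> D"
    and f_nonneg: "\<And>j. 0 \<le> f j" and f_anti: "antimono f"
    and uV: "u \<in> cycle_vertices n E"
  shows "(\<Sum>w\<in>neighbours n E u. f (cycle_depth n E w)) \<le> 2 * f 0 + (real D - 2) * f 1"
proof -
  let ?N0 = "neighbours n E u \<inter> cycle_vertices n E"
  have neighbour_less: "w < n" if "w \<in> neighbours n E u" for w
    using that unfolding neighbours_def by blast
  have "(\<Sum>w\<in>neighbours n E u. f (cycle_depth n E w)) \<le> real 2 * (f 0 - f 1) + real D * f 1"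
  proof (rule sum_le_split_bound[OF finite_neighbours _ _ card_le])
    show "f (cycle_depth n E w) \<le> f 0" if "w \<in> ?N0" for w
    proof -
      have "w < n" "w \<in> cycle_vertices n E" using that neighbour_less by auto
      hence "cycle_depth n E w = 0" using cycle_depth_eq_0_iff by simp
      thus ?thesis by simp
    qed
    show "f (cycle_depth n E w) \<le> f 1" if "w \<in> neighbours n E u - ?N0" for w
    proof -
      have "w < n" "w \<notin> cycle_vertices n E" using that neighbour_less by auto
      hence "cycle_depth n E w \<noteq> 0" using cycle_depth_eq_0_iff by simp
      hence "1 \<le> cycle_depth n E w" by simp
      with f_anti show ?thesis by (rule antimonoD)
    qed
  qed (use card_cycle_neighbours_le_2[OF uV] f_nonneg f_anti in \<open>auto dest: antimonoD\<close>)
  thus ?thesis by (simp add: algebra_simps)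
qed

lemma neighbour_sum_le_off_cycle:
  fixes f :: "nat \<Rightarrow> real"
  assumes card_le: "card (neighbours n E u) \<le> D"
    and f_nonneg: "\<And>j. 0 \<le> f j" and f_anti: "antimono f"
    and u: "u < n" and j: "cycle_depth n E u = j" "1 \<le> j"
  shows "(\<Sum>w\<in>neighbours n E u. f (cycle_depth n E w)) \<le> f (j - 1) + (real D - 1) * f (j + 1)"
proof -
  have f_le: "f j' \<le> f i" if "i \<le> j'" for i j' using f_anti that by (rule antimonoD)
  have uV: "u \<notin> cycle_vertices n E" using cycle_depth_eq_0_iff[OF u] j by simp
  let ?N0 = "{w \<in> neighbours n E u. cycle_depth n E w \<le> j}"
  have "\<forall>a\<in>?N0. \<forall>b\<in>?N0. a = b"
    using at_most_one_lower_neighbour[OF u] j unfolding neighbours_def by auto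
  hence "card ?N0 \<le> 1" using card_le_Suc0_iff_eq[of ?N0] by simp
  hence "(\<Sum>w\<in>neighbours n E u. f (cycle_depth n E w))
      \<le> real 1 * (f (j - 1) - f (j + 1)) + real D * f (j + 1)"
  proof (intro sum_le_split_bound[OF finite_neighbours _ _ card_le])
    show "f (cycle_depth n E w) \<le> f (j - 1)" if "w \<in> ?N0" for w
    proof -
      have "E u w" using that unfolding neighbours_def by blast
      moreover have "{u, w} \<notin> the_cycle n E" using uV by blast
      ultimately have "forest_rel n E u w" unfolding forest_rel_def by simp
      hence "forest_rel n E w u" by (rule forest_rel_sym)
      hence "j \<le> Suc (cycle_depth n E w)" unfolding j(1)[symmetric] by (rule cycle_depth_forest_step)
      thus ?thesis by (intro f_le) simp
    qed
    show "f (cycle_depth n E w) \<le> f (j + 1)" if "w \<in> neighbours n E u - ?N0" for w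
      using that by (intro f_le) auto
  qed (use f_nonneg f_le in auto)
  thus ?thesis by (simp add: algebra_simps)
qed

lemma neighbour_sum_less:
  fixes f :: "nat \<Rightarrow> real"
  assumes deg_le: "\<And>u. u < n \<Longrightarrow> deg n E u \<le> D"
    and f_nonneg: "\<And>j. 0 \<le> f j" and f_anti: "antimono f"
    and at_cycle: "2 * f 0 + (real D - 2) * f 1 < \<mu> * f 0"
    and off_cycle: "\<And>j. 1 \<le> j \<Longrightarrow> j < height n E \<Longrightarrow>
      f (j - 1) + (real D - 1) * f (j + 1) < \<mu> * f j"
    and u: "u < n"
  shows "(\<Sum>w\<in>neighbours n E u. f (cycle_depth n E w)) < \<mu> * f (cycle_depth n E u)"
proof -
  have card_le: "card (neighbours n E u) \<le> D"
    using deg_le[OF u] by (simp add: deg_eq_card_neighbours)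
  show ?thesis
  proof (cases "cycle_depth n E u = 0")
    case True
    hence "u \<in> cycle_vertices n E" using cycle_depth_eq_0_iff[OF u] by simp
    with neighbour_sum_le_on_cycle[OF card_le f_nonneg f_anti] at_cycle True show ?thesis by simp
  next
    case False
    hence "1 \<le> cycle_depth n E u" "cycle_depth n E u < height n E"
      using cycle_depth_less_height[OF u] by auto
    with neighbour_sum_le_off_cycle[OF card_le f_nonneg f_anti u refl] off_cycle show ?thesis
      by fastforce
  qed
qed

end

section \<open>The sine test sequence\<close>

lemma cos_pi_div_5_gt: "3 / 4 < cos (pi / 5)"
proof -
  define c where "c = cos (pi / 5)"
  have c_pos: "c > 0" unfolding c_def by (rule cos_gt_zero) (use pi_gt_zero in linarith)+
  have "cos (3 * (pi / 5)) = 4 * c ^ 3 - 3 * c" unfolding c_def by (rule cos_treble_cos)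
  moreover have "cos (2 * (pi / 5)) = 2 * c\<^sup>2 - 1" unfolding c_def by (rule cos_double_cos)
  moreover have "3 * (pi / 5) = pi - 2 * (pi / 5)" by simp
  ultimately have "4 * c ^ 3 - 3 * c = - (2 * c\<^sup>2 - 1)" by (metis cos_pi_minus)
  hence "(c + 1) * (4 * c\<^sup>2 - 2 * c - 1) = 0"
    by (simp add: algebra_simps power2_eq_square power3_eq_cube)
  hence c_eq: "4 * c\<^sup>2 = 2 * c + 1" using c_pos by simp
  show ?thesis
  proof (rule ccontr)
    assume "\<not> ?thesis"
    hence "c \<le> 3 / 4" unfolding c_def by simp
    hence "4 * c\<^sup>2 \<le> 3 * c" using c_pos by (simp add: power2_eq_square mult_right_mono)
    thus False using c_eq \<open>c \<le> 3 / 4\<close> by linarith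
  qed
qed

lemma cos_pi_div_8_gt: "sqrt 2 - 1 / 2 < cos (pi / 8)"
proof -
  define c where "c = cos (pi / 8)"
  have c_pos: "c > 0" unfolding c_def by (rule cos_gt_zero) (use pi_gt_zero in linarith)+
  have "cos (2 * (pi / 8)) = 2 * c\<^sup>2 - 1" unfolding c_def by (rule cos_double_cos)
  hence "2 * c\<^sup>2 - 1 = sqrt 2 / 2" using cos_45 by simp
  hence c_sq: "c\<^sup>2 = 1 / 2 + sqrt 2 / 4" by simp
  have "(7 / 5 :: real)\<^sup>2 < (sqrt 2)\<^sup>2" by (simp add: power2_eq_square)
  hence sqrt_2: "7 / 5 < sqrt 2" by (rule power2_less_imp_less) simp
  have "(sqrt 2 - 1 / 2)\<^sup>2 = 9 / 4 - sqrt 2" by (simp add: power2_eq_square algebra_simps)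
  also have "\<dots> < c\<^sup>2" using c_sq sqrt_2 by simp
  finally show ?thesis unfolding c_def[symmetric] by (rule power2_less_imp_less) (use c_pos in simp)
qed

lemma pi_div_le_pi_div: "m \<le> k \<Longrightarrow> pi / (2 * real k + 1) \<le> pi / (2 * real m + 1)"
  by (intro divide_left_mono) auto

lemma degree_height_margin:
  fixes D k :: nat
  assumes "(4 \<le> D \<and> 2 \<le> k) \<or> (D = 3 \<and> 4 \<le> k)"
  shows "0 < real D - 2 - 2 * sqrt (real D - 1) + 2 * cos (pi / (2 * real k + 1))"
proof -
  have cos_le: "cos (pi / m) \<le> cos (pi / (2 * real k + 1))" if "1 \<le> m" "m \<le> 2 * real k + 1" for m
    using that by (intro cos_monotone_0_pi_le divide_left_mono)
      (auto simp: field_simps intro!: add_pos_nonneg)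
  have cos_gt_3_4: "3 / 4 < cos (pi / (2 * real k + 1))" if "2 \<le> k"
    using cos_le[of 5] that cos_pi_div_5_gt by simp
  consider "5 \<le> D" "2 \<le> k" | "D = 4" "2 \<le> k" | "D = 3" "4 \<le> k" using assms by linarith
  thus ?thesis
  proof cases
    case 1
    define s where "s = sqrt (real D - 1)"
    have "2 \<le> s" unfolding s_def using 1 by (simp add: real_le_rsqrt)
    hence "1 * 1 \<le> (s - 1) * (s - 1)" by (intro mult_mono) auto
    moreover have "s\<^sup>2 = real D - 1" unfolding s_def using 1 by simp
    hence "real D - 2 - 2 * s = (s - 1) * (s - 1) - 2" by (simp add: power2_eq_square algebra_simps)
    ultimately have "-1 \<le> real D - 2 - 2 * s" by linarith
    thus ?thesis using cos_gt_3_4[OF 1(2)] unfolding s_def by linarith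
  next
    case 2
    have "(sqrt 3)\<^sup>2 < (7 / 4 :: real)\<^sup>2" by (simp add: power2_eq_square)
    hence "sqrt 3 < 7 / 4" by (rule power2_less_imp_less) simp
    thus ?thesis using cos_gt_3_4[OF 2(2)] 2 by simp
  next
    case 3
    have "cos (pi / 8) \<le> cos (pi / (2 * real k + 1))"
      using cos_le[of 8] 3 by simp
    thus ?thesis using cos_pi_div_8_gt 3 by simp
  qed
qed

text \<open>Note that sine_profile k s b j = 0 for j \<ge> k, by truncated subtraction.\<close>
definition sine_profile :: "nat \<Rightarrow> real \<Rightarrow> real \<Rightarrow> nat \<Rightarrow> real" where
  "sine_profile k s b j = sin (real (k - j) * b) / s ^ j"

lemma sine_profile_pos:
  assumes "0 < b" "real k * b < pi" "0 < s" "j < k"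
  shows "0 < sine_profile k s b j"
proof -
  have "real (k - j) * b \<le> real k * b" using assms by (intro mult_right_mono) auto
  hence "real (k - j) * b < pi" using assms by linarith
  moreover have "0 < real (k - j) * b" using assms by simp
  ultimately have "sin (real (k - j) * b) > 0" by (intro sin_gt_zero)
  thus ?thesis unfolding sine_profile_def using assms by simp
qed

lemma sine_profile_nonneg:
  assumes "0 \<le> b" "real k * b \<le> pi" "0 < s"
  shows "0 \<le> sine_profile k s b j"
proof -
  have "real (k - j) * b \<le> real k * b" using assms by (intro mult_right_mono) auto
  hence "sin (real (k - j) * b) \<ge> 0" using assms by (intro sin_ge_zero) auto
  thus ?thesis unfolding sine_profile_def using assms by simp
qed

lemma sine_profile_antimono:
  assumes b: "0 \<le> b" "real k * b \<le> pi / 2" and s: "1 \<le> s"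
  shows "antimono (sine_profile k s b)"
proof (rule antimonoI)
  fix i j :: nat assume ij: "i \<le> j"
  have le_kb: "real (k - m) * b \<le> real k * b" for m using b by (intro mult_right_mono) auto
  have "0 \<le> real (k - i) * b" using b by simp
  moreover have "real (k - i) * b \<le> pi" using b le_kb[of i] pi_gt_zero by linarith
  ultimately have sin_nonneg: "0 \<le> sin (real (k - i) * b)" by (rule sin_ge_zero)
  have "sin (real (k - j) * b) \<le> sin (real (k - i) * b)"
  proof (rule sin_monotone_2pi_le)
    have "0 \<le> real (k - j) * b" using b by simp
    thus "- (pi / 2) \<le> real (k - j) * b" using pi_gt_zero by linarith
    show "real (k - j) * b \<le> real (k - i) * b" using b ij by (intro mult_right_mono) auto
    show "real (k - i) * b \<le> pi / 2" using b le_kb[of i] by linarith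
  qed
  moreover have "s ^ i \<le> s ^ j" using ij s by (rule power_increasing)
  ultimately show "sine_profile k s b j \<le> sine_profile k s b i"
    unfolding sine_profile_def using s sin_nonneg by (intro frac_le) auto
qed

lemma sine_profile_recurrence:
  assumes "s \<noteq> 0" "1 \<le> j" "j < k"
  shows "sine_profile k s b (j - 1) + s\<^sup>2 * sine_profile k s b (j + 1)
    = 2 * s * cos b * sine_profile k s b j"
proof -
  obtain i where i: "j = Suc i" using assms by (cases j) auto
  define m where "m = k - Suc i"
  have "real (k - i) * b = real m * b + b" "real (k - (Suc i + 1)) * b = real m * b - b"
    using assms i unfolding m_def by (simp_all add: algebra_simps of_nat_diff)
  hence "sin (real (k - i) * b) + sin (real (k - (Suc i + 1)) * b) = 2 * sin (real m * b) * cos b"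
    by (simp add: sin_add sin_diff)
  thus ?thesis
    unfolding sine_profile_def i m_def[symmetric] using assms
    by (simp add: field_simps power2_eq_square)
qed

text \<open>
  With c = theta / 2, the angles k theta and (k - 1) theta are pi/2 - c and pi/2 - 3c, so everything
  is a polynomial in cos c and the difference of the two sides factors as
  cos c (Delta - 2 - 2 s + 2 cos theta) / s.
\<close>
lemma sine_profile_cycle_condition:
  fixes D k :: nat
  defines "\<theta> \<equiv> pi / (2 * real k + 1)" and "s \<equiv> sqrt (real D - 1)"
  assumes k: "1 \<le> k" and D: "2 \<le> D"
    and margin: "0 < real D - 2 - 2 * s + 2 * cos \<theta>"
  shows "2 * sine_profile k s \<theta> 0 + (real D - 2) * sine_profile k s \<theta> 1
    < 2 * s * cos \<theta> * sine_profile k s \<theta> 0"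
proof -
  define c where "c = \<theta> / 2"
  define y where "y = cos c"
  have s_pos: "0 < s" and s_sq: "s\<^sup>2 = real D - 1" unfolding s_def using D by auto
  have "\<theta> \<le> pi / 3" unfolding \<theta>_def using pi_div_le_pi_div[OF k] by simp
  hence "c \<le> pi / 6" unfolding c_def by simp
  moreover have "0 < c" unfolding c_def \<theta>_def by simp
  ultimately have y_pos: "0 < y"
    unfolding y_def by (intro cos_gt_zero) (use pi_gt_zero in linarith)+
  have "real k * \<theta> = pi / 2 - c" "(real k - 1) * \<theta> = pi / 2 - 3 * c"
    unfolding c_def \<theta>_def by (simp_all add: field_simps)
  hence sin_k: "sin (real k * \<theta>) = y" and sin_k1: "sin ((real k - 1) * \<theta>) = 4 * y ^ 3 - 3 * y"
    unfolding y_def by (simp_all add: sin_diff cos_treble_cos)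
  have cos_\<theta>: "cos \<theta> = 2 * y\<^sup>2 - 1"
    unfolding y_def c_def by (metis cos_double_cos mult_2 field_sum_of_halves)
  have f0: "sine_profile k s \<theta> 0 = y" using sin_k by (simp add: sine_profile_def)
  have f1: "sine_profile k s \<theta> 1 = (4 * y ^ 3 - 3 * y) / s"
    using k sin_k1 by (simp add: sine_profile_def of_nat_diff)
  have "2 * s * cos \<theta> * y - 2 * y - (real D - 2) * ((4 * y ^ 3 - 3 * y) / s)
      = y * (real D - 2 - 2 * s + 2 * cos \<theta>) / s"
  proof -
    have "real D = s\<^sup>2 + 1" using s_sq by simp
    thus ?thesis using s_pos by (simp add: cos_\<theta> field_simps power2_eq_square power3_eq_cube)
  qed
  also have "\<dots> > 0" using y_pos margin s_pos by simp
  finally show ?thesis unfolding f0 f1 by simp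
qed

lemma exists_angle_cycle_condition:
  fixes D k :: nat
  defines "\<theta> \<equiv> pi / (2 * real k + 1)" and "s \<equiv> sqrt (real D - 1)"
  assumes Dk: "(4 \<le> D \<and> 2 \<le> k) \<or> (D = 3 \<and> 4 \<le> k)"
  obtains b where "\<theta> < b" "b < pi / (2 * real k)"
    and "2 * sine_profile k s b 0 + (real D - 2) * sine_profile k s b 1
      < 2 * s * cos \<theta> * sine_profile k s b 0"
proof -
  have k: "1 \<le> k" and D: "2 \<le> D" using Dk by auto
  define g where "g b = 2 * s * cos \<theta> * sine_profile k s b 0 - 2 * sine_profile k s b 0
    - (real D - 2) * sine_profile k s b 1" for b
  from sine_profile_cycle_condition[OF k D degree_height_margin[OF Dk]]
  have "0 < g \<theta>" unfolding g_def \<theta>_def s_def by linarith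
  moreover have "s \<noteq> 0" unfolding s_def using D by simp
  hence "isCont g \<theta>" unfolding g_def sine_profile_def by (intro continuous_intros) auto
  ultimately have "\<forall>\<^sub>F b in at_right \<theta>. 0 < g b"
    by (metis isCont_def order_tendstoD(1) tendsto_within_subset subset_UNIV)
  then obtain b0 where b0: "\<theta> < b0" "\<And>b. \<theta> < b \<Longrightarrow> b < b0 \<Longrightarrow> 0 < g b"
    unfolding eventually_at_right_field by blast
  have "\<theta> < pi / (2 * real k)" unfolding \<theta>_def using k by (auto intro!: divide_strict_left_mono)
  define b where "b = (\<theta> + min b0 (pi / (2 * real k))) / 2"
  have "\<theta> < b" "b < pi / (2 * real k)" "0 < g b"
    using b0 \<open>\<theta> < pi / (2 * real k)\<close> unfolding b_def by auto
  thus ?thesis using that unfolding g_def by simp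
qed

lemma exists_test_profile:
  fixes D k :: nat
  defines "\<mu> \<equiv> 2 * sqrt (real D - 1) * cos (pi / (2 * real k + 1))"
  assumes Dk: "(4 \<le> D \<and> 2 \<le> k) \<or> (D = 3 \<and> 4 \<le> k)"
  obtains f :: "nat \<Rightarrow> real"
  where "\<And>j. j < k \<Longrightarrow> 0 < f j" "\<And>j. 0 \<le> f j" "antimono f"
    and "2 * f 0 + (real D - 2) * f 1 < \<mu> * f 0"
    and "\<And>j. 1 \<le> j \<Longrightarrow> j < k \<Longrightarrow> f (j - 1) + (real D - 1) * f (j + 1) < \<mu> * f j"
proof -
  define \<theta> where "\<theta> = pi / (2 * real k + 1)"
  define s where "s = sqrt (real D - 1)"
  have k: "1 \<le> k" and s: "1 \<le> s" "s\<^sup>2 = real D - 1" unfolding s_def using Dk by auto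
  obtain b where b: "\<theta> < b" "b < pi / (2 * real k)"
    and at_cycle: "2 * sine_profile k s b 0 + (real D - 2) * sine_profile k s b 1
      < \<mu> * sine_profile k s b 0"
    using exists_angle_cycle_condition[OF Dk] unfolding \<mu>_def \<theta>_def s_def by blast
  have "0 < \<theta>" unfolding \<theta>_def by simp
  hence b_pos: "0 < b" using b(1) by linarith
  have kb: "real k * b < pi / 2"
    using mult_strict_left_mono[OF b(2), of "real k"] k by simp
  hence kb_pi: "real k * b < pi" using pi_gt_zero by linarith
  have "1 * b \<le> real k * b" using k b_pos by (intro mult_right_mono) auto
  hence "b \<le> pi" using kb_pi by linarith
  hence cos_b: "cos b < cos \<theta>" using \<open>0 < \<theta>\<close> b(1) by (intro cos_monotone_0_pi) auto
  show ?thesis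
  proof (rule that[of "sine_profile k s b"])
    show pos: "0 < sine_profile k s b j" if "j < k" for j
      using b_pos kb_pi s that by (intro sine_profile_pos) auto
    show "0 \<le> sine_profile k s b j" for j
      using b_pos kb_pi s by (intro sine_profile_nonneg) auto
    show "antimono (sine_profile k s b)"
      using b_pos kb s by (intro sine_profile_antimono) auto
    show "sine_profile k s b (j - 1) + (real D - 1) * sine_profile k s b (j + 1)
        < \<mu> * sine_profile k s b j" if j: "1 \<le> j" "j < k" for j
    proof -
      have "2 * s * cos b * sine_profile k s b j < \<mu> * sine_profile k s b j"
        using cos_b s pos[OF j(2)] unfolding \<mu>_def \<theta>_def s_def by simp
      thus ?thesis using sine_profile_recurrence[OF _ j, of s b] s by simp
    qed
  qed (fact at_cycle)
qed

theorem mainTheorem10: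
  fixes n :: nat and E :: "nat \<Rightarrow> nat \<Rightarrow> bool" and \<alpha> :: real
  assumes "unicyclic n E"
    and "max_deg n E \<ge> 3"
    and "0 \<le> \<alpha>" and "\<alpha> < 1"
    and "max_deg n E \<ge> 4 \<or> (max_deg n E = 3 \<and> height n E \<ge> 4)"
  shows "spectral_radius (A_alpha \<alpha> n E) <
    \<alpha> * real (max_deg n E) + 2 * (1 - \<alpha>) * sqrt (real (max_deg n E) - 1)
      * cos (pi / (2 * real (height n E) + 1))"
proof -
  let ?D = "max_deg n E" and ?k = "height n E"
  let ?\<mu> = "2 * sqrt (real ?D - 1) * cos (pi / (2 * real ?k + 1))"
  have "(4 \<le> ?D \<and> 2 \<le> ?k) \<or> (?D = 3 \<and> 4 \<le> ?k)"
    using assms(5) height_ge_2[OF assms(1,2)] by auto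
  then obtain f where f_pos: "\<And>j. j < ?k \<Longrightarrow> 0 < f j"
    and f_nonneg: "\<And>j. 0 \<le> f j" and f_anti: "antimono f"
    and at_cycle: "2 * f 0 + (real ?D - 2) * f 1 < ?\<mu> * f 0"
    and off_cycle: "\<And>j. 1 \<le> j \<Longrightarrow> j < ?k \<Longrightarrow>
      f (j - 1) + (real ?D - 1) * f (j + 1) < ?\<mu> * f j"
    by (rule exists_test_profile) blast
  have "spectral_radius (A_alpha \<alpha> n E) < \<alpha> * real ?D + (1 - \<alpha>) * ?\<mu>"
  proof (rule spectral_radius_A_alpha_less[OF unicyclic_pos[OF assms(1)] assms(3,4) deg_le_max_deg])
    fix u assume u: "u < n"
    show "0 < f (cycle_depth n E u)" using f_pos cycle_depth_less_height[OF assms(1) u] .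
    show "(\<Sum>w\<in>neighbours n E u. f (cycle_depth n E w)) < ?\<mu> * f (cycle_depth n E u)"
      using neighbour_sum_less[OF assms(1) deg_le_max_deg f_nonneg f_anti at_cycle off_cycle u] .
  qed
  thus ?thesis by (simp add: algebra_simps)
qed

end
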